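(* For any time complexity function $t$, $$\mathrm{IP}(\mathrm{constant\ space},\ \infty\ \mathrm{private\ random\ bits},\ \infty\ \mathrm{public\ random\ bits},\ O(t(n))\ \mathrm{time})\subseteq\mathrm{IP}(\mathrm{constant\ space},\ O(n)\ \mathrm{private\ random\ bits},\ O(n)\ \mathrm{public\ random\ bits},\ O(n)\ \mathrm{time}),$$ and the same inclusion holds for the $\mathrm{IP}^{\mathrm{high}}$ variants of the two classes.
   Context: Interactive proof systems. A verifier is a probabilistic Turing machine with a read-only input tape containing $\rhd w\lhd$, a read-write work tape, and a read-write communication cell shared with a prover. Its states may flip private coins (fair random bits hidden from the prover), flip public coins (fair random bits revealed to the prover; public-coin states are communication states), and/or write to the communication cell. In each step, based on the state, scanned symbols and coin outcomes, it changes state, writes on the work tape, writes to the communication cell (if in a communication state), and moves its heads. Each time the verifier writes to the communication cell, the prover overwrites it with a symbol that is an arbitrary function of $w$, the history of public coin outcomes, and the communication symbols so far. The verifier halts on entering accept/reject; it may run forever. $V$ verifies $L$ with error $\varepsilon=\max(\varepsilon^+,\varepsilon^-)$, $\varepsilon^\pm<1/2$, if some prover makes $V$ accept every $w\in L$ with probability at least $1-\varepsilon^+$, and for every prover and every $w\notin L$, $V$ halts and rejects with probability at least $1-\varepsilon^-$. $\mathrm{IP}^{\mathrm{high}}(\ldots)$ is the class of languages verifiable with some error $\varepsilon<1/2$ by verifiers within the listed resource bounds; $\mathrm{IP}(\ldots)$ is the class of languages verifiable with arbitrarily low error (for every $\varepsilon>0$ there is a verifier within the bounds with error at most $\varepsilon$).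 All bounds here are worst-case functions of the input length $n$; constant space means $O(1)$ work-tape cells; $\infty$ means no bound. *)

theory Defs
  imports "HOL-Probability.Probability"
begin

text \<open>Symbols of the read-only input tape, which holds LEnd w REnd.\<close>
datatype 'a isym = LEnd | Sym 'a | REnd

text \<open>States, work-tape symbols and communication symbols are natural
numbers, restricted to the finite sets states, wsyms, csyms.
Work-tape blank and initial content of the communication cell are 0.
delta q a g c b1 b2 = (q', g', c', dI, dW): given state q, scanned input symbol a,
scanned work symbol g, content c of the communication cell, private coin outcome b1
(only meaningful in private-coin states) and public coin outcome b2 (only meaningful
in public-coin states) it yields the new state, the symbol written on the work tape,
the symbol written to the communication cell (only used in communication states),
and the moves of the input and work heads.\<close>
record 'a verifier =
  states :: "nat set"
  wsyms :: "nat set"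
  csyms :: "nat set"
  start :: nat
  acc :: nat
  rej :: nat
  privst :: "nat \<Rightarrow> bool"
  pubst :: "nat \<Rightarrow> bool"
  commst :: "nat \<Rightarrow> bool"
  delta :: "nat \<Rightarrow> 'a isym \<Rightarrow> nat \<Rightarrow> nat \<Rightarrow> bool \<Rightarrow> bool \<Rightarrow> nat \<times> nat \<times> nat \<times> int \<times> int"

definition wf_verifier :: "'a verifier \<Rightarrow> bool" where
  "wf_verifier V \<longleftrightarrow>
     finite (states V) \<and> finite (wsyms V) \<and> finite (csyms V) \<and>
     start V \<in> states V \<and> acc V \<in> states V \<and> rej V \<in> states V \<and> acc V \<noteq> rej V \<and>
     0 \<in> wsyms V \<and> 0 \<in> csyms V \<and>
     (\<forall>q. pubst V q \<longrightarrow> commst V q) \<and>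
     (\<forall>q a g c b1 b2. q \<in> states V \<longrightarrow> g \<in> wsyms V \<longrightarrow> c \<in> csyms V \<longrightarrow>
        (case delta V q a g c b1 b2 of (q', g', c', dI, dW) \<Rightarrow>
           q' \<in> states V \<and> g' \<in> wsyms V \<and> c' \<in> csyms V \<and>
           dI \<in> {-1, 0, 1} \<and> dW \<in> {-1, 0, 1}))"

text \<open>A prover: its answer is a function of the input and of the communication history,
i.e. the list (in order) of symbols written by the verifier together with the public
coin outcome of that communication step (if it was a public-coin step).\<close>
type_synonym 'a prover = "'a list \<Rightarrow> (nat \<times> bool option) list \<Rightarrow> nat"

definition valid_prover :: "'a verifier \<Rightarrow> 'a prover \<Rightarrow> bool" where
  "valid_prover V P \<longleftrightarrow> (\<forall>w h. P w h \<in> csyms V)"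

record config =
  cst :: nat
  ihead :: nat
  wtape :: "nat \<Rightarrow> nat"
  whead :: nat
  cell :: nat
  hist :: "(nat \<times> bool option) list"
  npriv :: nat
  npub :: nat

definition init_config :: "'a verifier \<Rightarrow> config" where
  "init_config V = \<lparr>cst = start V, ihead = 0, wtape = (\<lambda>_. 0), whead = 0, cell = 0,
     hist = [], npriv = 0, npub = 0\<rparr>"

definition input_sym :: "'a list \<Rightarrow> nat \<Rightarrow> 'a isym" where
  "input_sym w i = (if i = 0 then LEnd else if i \<le> length w then Sym (w ! (i - 1)) else REnd)"

text \<open>One step. The coin sequence \<omega> supplies fresh fair bits; private and public coin
flips consume them in order (the private bit first).\<close>
definition step :: "'a verifier \<Rightarrow> 'a prover \<Rightarrow> 'a list \<Rightarrow> (nat \<Rightarrow> bool) \<Rightarrow> config \<Rightarrow> config" where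
  "step V P w \<omega> c =
    (if cst c = acc V \<or> cst c = rej V then c else
     let q = cst c;
         ptr = npriv c + npub c;
         b1 = (if privst V q then \<omega> ptr else False);
         ptr' = (if privst V q then ptr + 1 else ptr);
         b2 = (if pubst V q then \<omega> ptr' else False);
         (q', g', c', dI, dW) = delta V q (input_sym w (ihead c)) (wtape c (whead c)) (cell c) b1 b2;
         h' = hist c @ [(c', if pubst V q then Some b2 else None)]
     in \<lparr>cst = q',
         ihead = nat (max 0 (min (int (length w) + 1) (int (ihead c) + dI))),
         wtape = (wtape c)(whead c := g'),
         whead = nat (max 0 (int (whead c) + dW)),
         cell = (if commst V q then P w h' else cell c),
         hist = (if commst V q then h' else hist c),
         npriv = (if privst V q then npriv c + 1 else npriv c),
         npub = (if pubst V q then npub c + 1 else npub c)\<rparr>)"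

definition run :: "'a verifier \<Rightarrow> 'a prover \<Rightarrow> 'a list \<Rightarrow> (nat \<Rightarrow> bool) \<Rightarrow> nat \<Rightarrow> config" where
  "run V P w \<omega> k = (step V P w \<omega> ^^ k) (init_config V)"

definition coins :: "(nat \<Rightarrow> bool) measure" where
  "coins = (\<Pi>\<^sub>M i\<in>(UNIV::nat set). measure_pmf (bernoulli_pmf (1/2)))"

definition prob_accept :: "'a verifier \<Rightarrow> 'a prover \<Rightarrow> 'a list \<Rightarrow> real" where
  "prob_accept V P w = measure coins {\<omega> \<in> space coins. \<exists>k. cst (run V P w \<omega> k) = acc V}"

definition prob_reject :: "'a verifier \<Rightarrow> 'a prover \<Rightarrow> 'a list \<Rightarrow> real" where
  "prob_reject V P w = measure coins {\<omega> \<in> space coins. \<exists>k. cst (run V P w \<omega> k) = rej V}"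

definition verifies :: "'a verifier \<Rightarrow> 'a list set \<Rightarrow> real \<Rightarrow> real \<Rightarrow> bool" where
  "verifies V L ep em \<longleftrightarrow> ep < 1/2 \<and> em < 1/2 \<and>
     (\<exists>P. valid_prover V P \<and> (\<forall>w\<in>L. prob_accept V P w \<ge> 1 - ep)) \<and>
     (\<forall>P. valid_prover V P \<longrightarrow> (\<forall>w. w \<notin> L \<longrightarrow> prob_reject V P w \<ge> 1 - em))"

definition const_space :: "'a verifier \<Rightarrow> bool" where
  "const_space V \<longleftrightarrow> (\<exists>c. \<forall>w P \<omega> k. valid_prover V P \<longrightarrow> whead (run V P w \<omega> k) \<le> c)"

definition priv_bits_O :: "'a verifier \<Rightarrow> (nat \<Rightarrow> nat) \<Rightarrow> bool" where
  "priv_bits_O V f \<longleftrightarrow> (\<exists>c N. \<forall>w. length w \<ge> N \<longrightarrow> (\<forall>P \<omega> k. valid_prover V P \<longrightarrow>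
      npriv (run V P w \<omega> k) \<le> c * f (length w)))"

definition pub_bits_O :: "'a verifier \<Rightarrow> (nat \<Rightarrow> nat) \<Rightarrow> bool" where
  "pub_bits_O V f \<longleftrightarrow> (\<exists>c N. \<forall>w. length w \<ge> N \<longrightarrow> (\<forall>P \<omega> k. valid_prover V P \<longrightarrow>
      npub (run V P w \<omega> k) \<le> c * f (length w)))"

definition time_O :: "'a verifier \<Rightarrow> (nat \<Rightarrow> nat) \<Rightarrow> bool" where
  "time_O V f \<longleftrightarrow> (\<exists>c N. \<forall>w. length w \<ge> N \<longrightarrow> (\<forall>P \<omega>. valid_prover V P \<longrightarrow>
      (\<exists>k \<le> c * f (length w). cst (run V P w \<omega> k) \<in> {acc V, rej V})))"

definition IP_high :: "('a verifier \<Rightarrow> bool) \<Rightarrow> 'a list set set" where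
  "IP_high R = {L. \<exists>V ep em. wf_verifier V \<and> R V \<and> verifies V L ep em}"

definition IP :: "('a verifier \<Rightarrow> bool) \<Rightarrow> 'a list set set" where
  "IP R = {L. \<forall>\<epsilon>>0. \<exists>V ep em. wf_verifier V \<and> R V \<and> verifies V L ep em \<and> max ep em \<le> \<epsilon>}"

text \<open>IP(constant space, infinite private bits, infinite public bits, O(t) time)\<close>
definition bounds_const_time :: "(nat \<Rightarrow> nat) \<Rightarrow> 'a verifier \<Rightarrow> bool" where
  "bounds_const_time t V \<longleftrightarrow> const_space V \<and> time_O V t"

definition bounds_linear :: "'a verifier \<Rightarrow> bool" where
  "bounds_linear V \<longleftrightarrow> const_space V \<and> priv_bits_O V (\<lambda>n. n) \<and> pub_bits_O V (\<lambda>n. n)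
     \<and> time_O V (\<lambda>n. n)"

end

theory Submission
  imports Defs
begin

text \<open>A verifier that uses constant space and halts on every input of length at least N,
against every prover and for every coin sequence, sees only O(n) distinct configurations
(state, input head, work tape, work head, communication cell) on inputs of length n. If some
run lasted longer than that number of steps, a configuration would repeat before halting; since
the prover may answer as a function of the length of the history and the coins are arbitrary,
the cycle can be replayed forever by a suitable prover and coin sequence, contradicting halting.
Hence every run halts within O(n) steps, which bounds the running time and the numbers of
private and public coins linearly. The verifier itself is unchanged, so its error
probabilities, and hence membership in IP or in IP_high, are preserved.\<close>

lemma path_pumping:
  assumes "finite S" "\<And>k. k \<le> card S \<Longrightarrow> p k \<in> S" "\<And>k. k < card S \<Longrightarrow> R (p k) (p (Suc k))"
  shows "\<exists>p'. p' 0 = p 0 \<and> (\<forall>k. R (p' k) (p' (Suc k)))"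
proof -
  have "\<not> inj_on p {..card S}"
  proof
    assume "inj_on p {..card S}"
    then have "card {..card S} \<le> card S"
      by (rule card_inj_on_le) (use assms(1,2) in auto)
    then show False by simp
  qed
  then obtain a b where ab: "a \<le> card S" "b \<le> card S" "a \<noteq> b" "p a = p b"
    by (auto simp: inj_on_def)
  define i j where "i = min a b" and "j = max a b"
  have ij: "i < j" "j \<le> card S" "p i = p j"
    using ab by (auto simp: i_def j_def min_def max_def)
  define g where "g = rec_nat 0 (\<lambda>_ m. if Suc m = j then i else Suc m)"
  have g_0: "g 0 = 0" and g_Suc: "g (Suc k) = (if Suc (g k) = j then i else Suc (g k))" for k
    by (simp_all add: g_def)
  have g_less: "g k < j" for k
    using ij(1) by (induction k) (auto simp: g_0 g_Suc)
  have "p (g (Suc k)) = p (Suc (g k))" for k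
    using ij(3) by (simp add: g_Suc)
  then have R_g: "R (p (g k)) (p (g (Suc k)))" for k
    using assms(3)[of "g k"] g_less[of k] ij(2) by simp
  show ?thesis
    by (rule exI[of _ "p \<circ> g"]) (simp add: g_0 R_g)
qed

lemma stream_of_blocks:
  fixes g :: "nat \<Rightarrow> 'a list"
  assumes "x \<in> S" "\<And>k. set (g k) \<subseteq> S"
  shows "\<exists>f. range f \<subseteq> S \<and> (\<forall>k i. i < length (g k) \<longrightarrow> f ((\<Sum>j<k. length (g j)) + i) = g k ! i)"
proof -
  let ?xs = "\<lambda>k. concat (map g [0..<k])"
  have prefix: "\<exists>ys. ?xs k' = ?xs k @ ys" if "k \<le> k'" for k k'
    using that
  proof (induction k' rule: dec_induct)
    case (step n)
    then obtain ys where "?xs n = ?xs k @ ys" by blast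
    then show ?case by (intro exI[of _ "ys @ g n"]) simp
  qed simp
  have nth_stable: "?xs k' ! m = ?xs k ! m" if "k \<le> k'" "m < length (?xs k)" for k k' m
    using prefix[OF that(1)] that(2) by (auto simp: nth_append)
  define f where
    "f m = (if \<exists>k. m < length (?xs k) then ?xs (SOME k. m < length (?xs k)) ! m else x)" for m
  have f_eq: "f m = ?xs k ! m" if "m < length (?xs k)" for k m
  proof -
    let ?k = "SOME k. m < length (?xs k)"
    have "m < length (?xs ?k)" using that by (rule someI)
    then show ?thesis
      using that nth_stable[of k ?k m] nth_stable[of ?k k m] by (cases "k \<le> ?k") (auto simp: f_def)
  qed
  have "f m \<in> S" for m
  proof (cases "\<exists>k. m < length (?xs k)")
    case True
    then obtain k where "m < length (?xs k)" by blast
    then have "?xs k ! m \<in> set (?xs k)" by (rule nth_mem)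
    then show ?thesis using f_eq \<open>m < length (?xs k)\<close> assms(2) by auto
  qed (simp add: f_def assms(1))
  moreover have "f ((\<Sum>j<k. length (g j)) + i) = g k ! i" if "i < length (g k)" for k i
  proof -
    have len: "length (?xs k) = (\<Sum>j<k. length (g j))"
      by (induction k) simp_all
    then show ?thesis
      using f_eq[of "(\<Sum>j<k. length (g j)) + i" "Suc k"] that by (simp add: nth_append)
  qed
  ultimately show ?thesis by blast
qed

lemma run_0 [simp]: "run V P w \<omega> 0 = init_config V"
  by (simp add: run_def)

lemma run_Suc [simp]: "run V P w \<omega> (Suc k) = step V P w \<omega> (run V P w \<omega> k)"
  by (simp add: run_def)

lemma step_halted: "cst c \<in> {acc V, rej V} \<Longrightarrow> step V P w \<omega> c = c"
  by (auto simp: step_def)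

lemma step_counters:
  assumes "cst c \<notin> {acc V, rej V}"
  shows "npriv (step V P w \<omega> c) = npriv c + (if privst V (cst c) then 1 else 0)"
    and "npub (step V P w \<omega> c) = npub c + (if pubst V (cst c) then 1 else 0)"
    and "length (hist (step V P w \<omega> c)) = length (hist c) + (if commst V (cst c) then 1 else 0)"
  using assms by (simp_all add: step_def Let_def case_prod_beta)

lemma run_halted:
  assumes "cst (run V P w \<omega> k0) \<in> {acc V, rej V}" "k0 \<le> k"
  shows "run V P w \<omega> k = run V P w \<omega> k0"
  using assms(2)
proof (induction k rule: dec_induct)
  case (step n)
  then show ?case using step_halted[OF assms(1)] by simp
qed simp

lemma run_counters_le: "npriv (run V P w \<omega> k) \<le> k \<and> npub (run V P w \<omega> k) \<le> k"
proof (induction k)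
  case (Suc k)
  then show ?case
    by (cases "cst (run V P w \<omega> k) \<in> {acc V, rej V}") (simp_all add: step_halted step_counters)
qed (simp add: init_config_def)

lemma run_counters_le_halting_time:
  assumes "cst (run V P w \<omega> k0) \<in> {acc V, rej V}"
  shows "npriv (run V P w \<omega> k) \<le> k0 \<and> npub (run V P w \<omega> k) \<le> k0"
proof (cases "k \<le> k0")
  case True
  then show ?thesis using run_counters_le[of V P w \<omega> k] by linarith
next
  case False
  then show ?thesis using run_halted[OF assms, of k] run_counters_le[of V P w \<omega> k0] by simp
qed

text \<open>The core of a configuration is the part the transition function reads. The
history and the coin counters only determine which prover answer and which coins are
used, and are therefore free to be chosen by an adversarial prover and coin sequence.\<close>

type_synonym core = "nat \<times> nat \<times> (nat \<Rightarrow> nat) \<times> nat \<times> nat"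

definition core :: "config \<Rightarrow> core" where
  "core c = (cst c, ihead c, wtape c, whead c, cell c)"

definition core_next :: "'a verifier \<Rightarrow> 'a list \<Rightarrow> core \<Rightarrow> bool \<Rightarrow> bool \<Rightarrow> nat \<Rightarrow> core" where
  "core_next V w s b1 b2 a = (case s of (q, i, tp, hp, cl) \<Rightarrow>
     (case delta V q (input_sym w i) (tp hp) cl (if privst V q then b1 else False)
              (if pubst V q then b2 else False) of (q', g', c', dI, dW) \<Rightarrow>
      (q', nat (max 0 (min (int (length w) + 1) (int i + dI))), tp(hp := g'),
       nat (max 0 (int hp + dW)), if commst V q then a else cl)))"

definition core_step :: "'a verifier \<Rightarrow> 'a list \<Rightarrow> core \<Rightarrow> core \<Rightarrow> bool" where
  "core_step V w s s' \<longleftrightarrow> (\<exists>b1 b2. \<exists>a \<in> csyms V. s' = core_next V w s b1 b2 a)"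

lemma fst_core [simp]: "fst (core c) = cst c"
  by (simp add: core_def)

lemma core_next_cong:
  assumes "privst V (fst s) \<Longrightarrow> b1 = b1'" "pubst V (fst s) \<Longrightarrow> b2 = b2'" "commst V (fst s) \<Longrightarrow> a = a'"
  shows "core_next V w s b1 b2 a = core_next V w s b1' b2' a'"
  using assms unfolding core_next_def by (auto split: prod.splits)

lemma core_of_step:
  assumes "cst c \<notin> {acc V, rej V}"
  shows "core (step V P w \<omega> c) = core_next V w (core c) (\<omega> (npriv c + npub c))
     (\<omega> (npriv c + npub c + (if privst V (cst c) then 1 else 0))) (P w (hist (step V P w \<omega> c)))"
  using assms by (simp add: step_def core_next_def core_def Let_def case_prod_beta)

lemma core_step_of_step:
  assumes "valid_prover V P" "cst c \<notin> {acc V, rej V}"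
  shows "core_step V w (core c) (core (step V P w \<omega> c))"
  using assms core_of_step unfolding core_step_def valid_prover_def by blast

definition tapes :: "'a verifier \<Rightarrow> nat \<Rightarrow> (nat \<Rightarrow> nat) set" where
  "tapes V C = {f. \<forall>i. (i \<in> {..C} \<longrightarrow> f i \<in> wsyms V) \<and> (i \<notin> {..C} \<longrightarrow> f i = 0)}"

definition core_space :: "'a verifier \<Rightarrow> nat \<Rightarrow> nat \<Rightarrow> core set" where
  "core_space V n C = states V \<times> {..n + 1} \<times> tapes V C \<times> {..C} \<times> csyms V"

lemma finite_tapes: "finite (wsyms V) \<Longrightarrow> finite (tapes V C)"
  unfolding tapes_def by (rule finite_set_of_finite_funs) simp_all

lemma finite_core_space: "wf_verifier V \<Longrightarrow> finite (core_space V n C)"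
  unfolding core_space_def wf_verifier_def by (simp add: finite_tapes)

lemma card_core_space:
  "card (core_space V n C) = (n + 2) * (card (states V) * card (tapes V C) * (C + 1) * card (csyms V))"
  unfolding core_space_def by (simp add: card_cartesian_product algebra_simps)

lemma wf_verifier_delta_closed:
  assumes "wf_verifier V" "q \<in> states V" "g \<in> wsyms V" "c \<in> csyms V"
    and "delta V q a g c b1 b2 = (q', g', c', dI, dW)"
  shows "q' \<in> states V \<and> g' \<in> wsyms V"
  using assms unfolding wf_verifier_def by (metis (mono_tags, lifting) case_prod_conv)

lemma core_next_in_core_space:
  assumes wf: "wf_verifier V" and s: "s \<in> core_space V (length w) C" and a: "a \<in> csyms V"
  shows "core_next V w s b1 b2 a \<in> states V \<times> {..length w + 1} \<times> tapes V C \<times> UNIV \<times> csyms V"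
proof -
  obtain q i tp hp cl where s_eq: "s = (q, i, tp, hp, cl)" by (cases s)
  have q: "q \<in> states V" and tp: "tp \<in> tapes V C" and hp: "hp \<le> C" and cl: "cl \<in> csyms V"
    using s by (auto simp: s_eq core_space_def)
  obtain q' g' c' dI dW where d: "delta V q (input_sym w i) (tp hp) cl
      (if privst V q then b1 else False) (if pubst V q then b2 else False) = (q', g', c', dI, dW)"
    by (metis prod_cases5)
  have "tp hp \<in> wsyms V" using tp hp by (simp add: tapes_def)
  then have "q' \<in> states V \<and> g' \<in> wsyms V" by (rule wf_verifier_delta_closed[OF wf q _ cl d])
  then show ?thesis using tp hp cl a by (auto simp: s_eq core_next_def d tapes_def)
qed

lemma step_in_core_space:
  assumes wf: "wf_verifier V" and P: "valid_prover V P" and c: "core c \<in> core_space V (length w) C"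
    and "whead (step V P w \<omega> c) \<le> C"
  shows "core (step V P w \<omega> c) \<in> core_space V (length w) C"
proof (cases "cst c \<in> {acc V, rej V}")
  case True
  then show ?thesis using c by (simp add: step_halted)
next
  case False
  have "P w (hist (step V P w \<omega> c)) \<in> csyms V" using P by (simp add: valid_prover_def)
  with wf c have "core (step V P w \<omega> c) \<in> states V \<times> {..length w + 1} \<times> tapes V C \<times> UNIV \<times> csyms V"
    unfolding core_of_step[OF False] by (rule core_next_in_core_space)
  then show ?thesis using assms(4) by (auto simp: core_space_def core_def)
qed

lemma run_in_core_space:
  assumes wf: "wf_verifier V" and P: "valid_prover V P" and space: "\<And>k. whead (run V P w \<omega> k) \<le> C"
  shows "core (run V P w \<omega> k) \<in> core_space V (length w) C"
proof (induction k)
  case 0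
  then show ?case
    using wf by (simp add: core_def core_space_def init_config_def tapes_def wf_verifier_def)
next
  case (Suc k)
  then show ?case using step_in_core_space[OF wf P] space[of "Suc k"] by simp
qed

lemma core_path_realizable:
  assumes start: "p 0 = core (init_config V)"
    and running: "\<And>k. fst (p k) \<notin> {acc V, rej V}"
    and path: "\<And>k. core_step V w (p k) (p (Suc k))"
  shows "\<exists>P \<omega>. valid_prover V P \<and> (\<forall>k. core (run V P w \<omega> k) = p k)"
proof -
  obtain B1 B2 A where A: "\<And>k. A k \<in> csyms V"
    and p_Suc: "\<And>k. p (Suc k) = core_next V w (p k) (B1 k) (B2 k) (A k)"
    using path unfolding core_step_def by metis
  define bits where "bits k = (if privst V (fst (p k)) then [B1 k] else [])
    @ (if pubst V (fst (p k)) then [B2 k] else [])" for k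
  define answers where "answers k = (if commst V (fst (p k)) then [A k] else [])" for k
  obtain \<omega> where \<omega>: "\<And>k i. i < length (bits k) \<Longrightarrow> \<omega> ((\<Sum>j<k. length (bits j)) + i) = bits k ! i"
    using stream_of_blocks[of True UNIV bits] by blast
  obtain ans where ans_csyms: "range ans \<subseteq> csyms V"
    and ans: "\<And>k i. i < length (answers k) \<Longrightarrow> ans ((\<Sum>j<k. length (answers j)) + i) = answers k ! i"
    using stream_of_blocks[of "A 0" "csyms V" answers] A by (auto simp: answers_def)
  define P :: "'a prover" where "P w' h = ans (length h - 1)" for w' h
  have P_eq: "P w' h = ans (length h - 1)" for w' h by (simp add: P_def)
  have "core (run V P w \<omega> k) = p k
      \<and> npriv (run V P w \<omega> k) + npub (run V P w \<omega> k) = (\<Sum>j<k. length (bits j))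
      \<and> length (hist (run V P w \<omega> k)) = (\<Sum>j<k. length (answers j))" for k
  proof (induction k)
    case 0
    then show ?case using start by (simp add: init_config_def)
  next
    case (Suc k)
    let ?c = "run V P w \<omega> k"
    from Suc.IH have core_c: "core ?c = p k"
      and coins_c: "npriv ?c + npub ?c = (\<Sum>j<k. length (bits j))"
      and hist_c: "length (hist ?c) = (\<Sum>j<k. length (answers j))" by blast+
    have q: "cst ?c = fst (p k)" using core_c fst_core by metis
    have c_running: "cst ?c \<notin> {acc V, rej V}" using running q by simp
    have b1: "\<omega> (npriv ?c + npub ?c) = B1 k" if "privst V (cst ?c)"
      using \<omega>[of 0 k] that q coins_c by (simp add: bits_def)
    have b2: "\<omega> (npriv ?c + npub ?c + (if privst V (cst ?c) then 1 else 0)) = B2 k"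
      if "pubst V (cst ?c)"
      using \<omega>[of 0 k] \<omega>[of 1 k] that q coins_c by (auto simp: bits_def)
    have a: "P w (hist (step V P w \<omega> ?c)) = A k" if "commst V (cst ?c)"
    proof -
      have "length (hist (step V P w \<omega> ?c)) = (\<Sum>j<k. length (answers j)) + 1"
        using step_counters(3)[OF c_running] that hist_c by simp
      then show ?thesis using ans[of 0 k] that q by (simp add: P_eq answers_def)
    qed
    have "core (run V P w \<omega> (Suc k)) = core_next V w (p k) (\<omega> (npriv ?c + npub ?c))
        (\<omega> (npriv ?c + npub ?c + (if privst V (cst ?c) then 1 else 0))) (P w (hist (step V P w \<omega> ?c)))"
      using core_of_step[OF c_running] core_c by simp
    also have "\<dots> = p (Suc k)"
      unfolding p_Suc by (rule core_next_cong) (use b1 b2 a q in simp_all)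
    finally show ?case
      using coins_c hist_c step_counters[OF c_running] q by (simp add: bits_def answers_def)
  qed
  moreover have "valid_prover V P" using ans_csyms by (auto simp: valid_prover_def P_eq)
  ultimately show ?thesis by blast
qed

lemma halts_within_card_core_space:
  assumes wf: "wf_verifier V"
    and space: "\<And>P \<omega> k. valid_prover V P \<Longrightarrow> whead (run V P w \<omega> k) \<le> C"
    and halts: "\<And>P \<omega>. valid_prover V P \<Longrightarrow> \<exists>k. cst (run V P w \<omega> k) \<in> {acc V, rej V}"
    and P: "valid_prover V P"
  shows "\<exists>k \<le> card (core_space V (length w) C). cst (run V P w \<omega> k) \<in> {acc V, rej V}"
proof (rule ccontr)
  let ?S = "core_space V (length w) C" and ?r = "run V P w \<omega>"
  assume "\<not> ?thesis"
  then have running: "cst (?r k) \<notin> {acc V, rej V}" if "k \<le> card ?S" for k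
    using that by blast
  let ?R = "\<lambda>s s'. fst s \<notin> {acc V, rej V} \<and> core_step V w s s'"
  have "\<exists>p. p 0 = core (?r 0) \<and> (\<forall>k. ?R (p k) (p (Suc k)))"
  proof (rule path_pumping)
    show "finite ?S" using wf by (rule finite_core_space)
    show "core (?r k) \<in> ?S" for k using run_in_core_space[OF wf P space[OF P]] .
    show "?R (core (?r k)) (core (?r (Suc k)))" if "k < card ?S" for k
      using running[of k] that core_step_of_step[OF P] by simp
  qed
  then obtain p where p_0: "p 0 = core (init_config V)" and p_R: "\<And>k. ?R (p k) (p (Suc k))"
    by auto
  then obtain P' \<omega>' where P': "valid_prover V P'" and p_run: "\<And>k. core (run V P' w \<omega>' k) = p k"
    using core_path_realizable[of p V w] by blast
  obtain k where "cst (run V P' w \<omega>' k) \<in> {acc V, rej V}" using halts[OF P'] by blast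
  moreover have "cst (run V P' w \<omega>' k) = fst (p k)" using p_run fst_core by metis
  ultimately show False using p_R[of k] by simp
qed

lemma bounds_linear_if_bounds_const_time:
  assumes wf: "wf_verifier V" and bounds: "bounds_const_time t V"
  shows "bounds_linear V"
proof -
  obtain C where space: "\<And>w P \<omega> k. valid_prover V P \<Longrightarrow> whead (run V P w \<omega> k) \<le> C"
    using bounds unfolding bounds_const_time_def const_space_def by blast
  obtain c N where time: "\<And>w P \<omega>. length w \<ge> N \<Longrightarrow> valid_prover V P \<Longrightarrow>
      \<exists>k \<le> c * t (length w). cst (run V P w \<omega> k) \<in> {acc V, rej V}"
    using bounds unfolding bounds_const_time_def time_O_def by blast
  define K where "K = card (states V) * card (tapes V C) * (C + 1) * card (csyms V)"
  have halt: "\<exists>k \<le> 3 * K * length w. cst (run V P w \<omega> k) \<in> {acc V, rej V}"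
    if w: "length w \<ge> max N 1" and P: "valid_prover V P" for w P \<omega>
  proof -
    obtain k where k: "k \<le> card (core_space V (length w) C)" "cst (run V P w \<omega> k) \<in> {acc V, rej V}"
      using halts_within_card_core_space[OF wf space _ P] time w by (metis max.boundedE)
    have "card (core_space V (length w) C) = (length w + 2) * K"
      by (simp add: card_core_space K_def)
    also have "\<dots> \<le> (3 * length w) * K" using w by (intro mult_le_mono1) simp
    also have "\<dots> = 3 * K * length w" by simp
    finally show ?thesis using k le_trans by blast
  qed
  then have "npriv (run V P w \<omega> k) \<le> 3 * K * length w \<and> npub (run V P w \<omega> k) \<le> 3 * K * length w"
    if "length w \<ge> max N 1" "valid_prover V P" for w P \<omega> k
    using that run_counters_le_halting_time by (meson le_trans)
  then show ?thesis
    using halt bounds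
    unfolding bounds_linear_def bounds_const_time_def priv_bits_O_def pub_bits_O_def time_O_def
    by blast
qed

lemma IP_mono:
  assumes "\<And>V. wf_verifier V \<Longrightarrow> R V \<Longrightarrow> R' V"
  shows "IP R \<subseteq> IP R'"
  using assms unfolding IP_def by blast

lemma IP_high_mono:
  assumes "\<And>V. wf_verifier V \<Longrightarrow> R V \<Longrightarrow> R' V"
  shows "IP_high R \<subseteq> IP_high R'"
  using assms unfolding IP_high_def by blast

theorem theorem3:
  fixes t :: "nat \<Rightarrow> nat"
  shows "(IP (bounds_const_time t) :: ('a::finite) list set set) \<subseteq> IP bounds_linear
    \<and> (IP_high (bounds_const_time t) :: ('a::finite) list set set) \<subseteq> IP_high bounds_linear"
  by (intro conjI IP_mono IP_high_mono) (fact bounds_linear_if_bounds_const_time)+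

end
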